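(* Let $\tilde{\boldsymbol x}\in L^2(\Omega,\mathbb R^m)$, $\tilde{\boldsymbol y}\in L^2(\Omega,\mathbb R^n)$ be zero-mean, and let $\tilde{\boldsymbol v}_1=\tilde{\boldsymbol y},\tilde{\boldsymbol v}_2,\ldots,\tilde{\boldsymbol v}_p\in L^2(\Omega,\mathbb R^n)$ be zero-mean and pairwise orthogonal ($E[\tilde{\boldsymbol v}_i\tilde{\boldsymbol v}_j^T]=\mathbb O$ for $i\neq j$). Let $\eta_1,\ldots,\eta_p$ be nonnegative integers with $\sum\eta_k\le\min\{m,n\}$. For each $k$ let $\beta_{k1}\ge\beta_{k2}\ge\cdots\ge0$ be the singular values of $E_{\tilde x\tilde v_k}(E_{\tilde v_k\tilde v_k}^{1/2})^\dagger$ and $G_{k\eta_k}$ the rank-$\le\eta_k$ truncation of its SVD (keeping the $\eta_k$ largest singular values). Let $\mathcal T_p^*(\tilde{\boldsymbol y})=\sum_{k=1}^pG_{k\eta_k}(E_{\tilde v_k\tilde v_k}^{1/2})^\dagger\tilde{\boldsymbol v}_k$, and let the Karhunen–Loève transform of rank $\eta_1$ be $\mathcal T_{\rm KLT}(\tilde{\boldsymbol y})=G_{1\eta_1}(E_{\tilde y\tilde y}^{1/2})^\dagger\tilde{\boldsymbol y}$ (the case $p=1$). Then $$E\big[\|\tilde{\boldsymbol x}-\mathcal T_p^*(\tilde{\boldsymbol y})\|^2\big]=E\big[\|\tilde{\boldsymbol x}-\mathcal T_{\rm KLT}(\tilde{\boldsymbol y})\|^2\big]-\sum_{k=2}^p\sum_{j=1}^{\eta_k}\beta_{kj}^2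 .$$
   Context: $E[\cdot]$ denotes expectation on a probability space $(\Omega,\Sigma,\mu)$; $E_{gh}:=E[\boldsymbol g\boldsymbol h^T]$ for random vectors $\boldsymbol g,\boldsymbol h$. $M^\dagger$ is the Moore–Penrose pseudo-inverse and $M^{1/2}$ the symmetric PSD square root. For vectors $\|\cdot\|$ is the Euclidean norm, for matrices the Frobenius norm. Matrices act on random vectors pointwise in $\omega$. *)

theory Defs
  imports "HOL-Probability.Probability"
begin

definition cross_cov :: "'a measure \<Rightarrow> ('a \<Rightarrow> real^'m) \<Rightarrow> ('a \<Rightarrow> real^'n) \<Rightarrow> real^'n^'m" where
  "cross_cov M g h = (\<chi> i j. integral\<^sup>L M (\<lambda>\<omega>. g \<omega> $ i * h \<omega> $ j))"

definition outer :: "real^'m \<Rightarrow> real^'n \<Rightarrow> real^'n^'m" where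
  "outer u v = (\<chi> i j. u $ i * v $ j)"

definition psd_mat :: "real^'n^'n \<Rightarrow> bool" where
  "psd_mat A \<longleftrightarrow> transpose A = A \<and> (\<forall>x. 0 \<le> x \<bullet> (A *v x))"

definition msqrt :: "real^'n^'n \<Rightarrow> real^'n^'n" where
  "msqrt A = (THE S. psd_mat S \<and> S ** S = A)"

definition pinv :: "real^'n^'m \<Rightarrow> real^'m^'n" where
  "pinv A = (THE X. A ** X ** A = A \<and> X ** A ** X = X \<and>
      transpose (A ** X) = A ** X \<and> transpose (X ** A) = X ** A)"

text \<open>Singular value decomposition A = sum_{j<q} s_j u_j v_j^T, q = min(m,n),
  with orthonormal u_j, v_j and s_0 >= s_1 >= ... >= 0 (indices start at 0).\<close>
definition is_svd :: "real^'n^'m \<Rightarrow> (nat \<Rightarrow> real) \<Rightarrow> (nat \<Rightarrow> real^'m) \<Rightarrow> (nat \<Rightarrow> real^'n) \<Rightarrow> bool" where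
  "is_svd A s u v \<longleftrightarrow>
     (let q = min CARD('m) CARD('n) in
       (\<forall>i<q. \<forall>j<q. u i \<bullet> u j = (if i = j then 1 else 0)) \<and>
       (\<forall>i<q. \<forall>j<q. v i \<bullet> v j = (if i = j then 1 else 0)) \<and>
       (\<forall>j<q. 0 \<le> s j) \<and>
       (\<forall>i j. i \<le> j \<longrightarrow> j < q \<longrightarrow> s j \<le> s i) \<and>
       A = (\<Sum>j<q. s j *\<^sub>R outer (u j) (v j)))"

definition svd_trunc :: "(nat \<Rightarrow> real) \<Rightarrow> (nat \<Rightarrow> real^'m) \<Rightarrow> (nat \<Rightarrow> real^'n) \<Rightarrow> nat \<Rightarrow> real^'n^'m" where
  "svd_trunc s u v r = (\<Sum>j<r. s j *\<^sub>R outer (u j) (v j))"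

end

theory Submission
  imports Defs
begin

text \<open>
  Writing B_k for the k-th gain, the mean squared error expands as
  E|x|^2 - 2 sum_k <B_k, E[x v_k^T]> + sum_(k,l) <B_k^T B_l, E[v_k v_l^T]> with Frobenius
  inner products, and orthogonality of the v_k removes the terms with k ~= l.
  Fix k, let E = E[v_k v_k^T], let P be the pseudo-inverse of the square root of E, and let
  G = U U^T A be the truncated SVD of A = E[x v_k^T] P, so that B_k = G P.
  Both remaining terms equal sum_(j < eta_k) s_kj^2: the first is <G, A>, and the second is
  <G, G P E P> = <G, G> because P P E P = P.
  So the error is E|x|^2 - sum_k sum_(j < eta_k) s_kj^2 for every orthogonal family, and the
  theorem compares the family v_1, ..., v_p with the single vector v_1 = y.
\<close>

lemma outer_mult_vector: "outer a b *v x = (b \<bullet> x) *\<^sub>R a"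
  by (simp add: vec_eq_iff outer_def matrix_vector_mult_def inner_vec_def sum_distrib_left mult_ac)

lemma outer_mult_outer: "outer a b ** outer c d = (b \<bullet> c) *\<^sub>R outer a d"
  by (simp add: vec_eq_iff outer_def matrix_matrix_mult_def inner_vec_def
      sum_distrib_left sum_distrib_right mult_ac)

lemma transpose_outer: "transpose (outer a b) = outer b a"
  by (simp add: vec_eq_iff outer_def transpose_def)

lemma sum_matrix_vector_mult: "sum f S *v x = (\<Sum>i\<in>S. f i *v x)"
  for f :: "'i \<Rightarrow> real^'n^'m"
  by (induction S rule: infinite_finite_induct) (auto simp: matrix_vector_mult_add_rdistrib)

lemma sum_matrix_mult: "sum f S ** B = (\<Sum>i\<in>S. f i ** B)"
  for f :: "'i \<Rightarrow> real^'n^'m" and B :: "real^'k^'n"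
  by (induction S rule: infinite_finite_induct)
     (auto simp: vec_eq_iff matrix_matrix_mult_def sum.distrib distrib_right)

lemma matrix_mult_sum_right: "B ** sum f S = (\<Sum>i\<in>S. B ** f i)"
  for f :: "'i \<Rightarrow> real^'k^'n" and B :: "real^'n^'m"
  by (induction S rule: infinite_finite_induct) (auto simp: matrix_add_ldistrib)

lemma scaleR_matrix_mult: "(c *\<^sub>R A) ** B = c *\<^sub>R (A ** B)"
  for A :: "real^'n^'m" and B :: "real^'k^'n"
  by (simp add: scalar_matrix_assoc)

lemma matrix_mult_scaleR: "A ** (c *\<^sub>R B) = c *\<^sub>R (A ** B)"
  for A :: "real^'n^'m" and B :: "real^'k^'n"
  by (simp add: matrix_scalar_ac scalar_matrix_assoc)

lemma transpose_sum: "transpose (sum f S) = (\<Sum>i\<in>S. transpose (f i))"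
  for f :: "'i \<Rightarrow> real^'k^'n"
  by (induction S rule: infinite_finite_induct) (auto simp: transpose_def vec_eq_iff)

lemma transpose_diff: "transpose (A - B) = transpose A - transpose B"
  for A B :: "real^'n^'m"
  by (simp add: transpose_def vec_eq_iff)

lemma inner_matrix_vector_mult_transpose:
  fixes B :: "real^'n^'m" and B' :: "real^'k^'m"
  shows "(B *v x) \<bullet> (B' *v y) = x \<bullet> ((transpose B ** B') *v y)"
  by (metis dot_lmul_matrix matrix_vector_mul_assoc vector_transpose_matrix)

lemma symmetric_matrix_inner_commute:
  fixes A :: "real^'n^'n"
  assumes "transpose A = A"
  shows "(A *v x) \<bullet> y = x \<bullet> (A *v y)"
  by (metis assms dot_lmul_matrix vector_transpose_matrix)

section \<open>Spectral theorem for symmetric matrices\<close>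

lemma linear_coeff_zero_if_quadratic_nonpos:
  fixes a c :: real
  assumes "\<And>t. 2 * t * a + t\<^sup>2 * c \<le> 0"
  shows "a = 0"
proof (rule ccontr)
  assume a: "a \<noteq> 0"
  define d where "d = \<bar>c\<bar> + 1"
  define t where "t = a / d"
  have d: "d > 0" unfolding d_def by simp
  have "2 * t * a + t\<^sup>2 * c = a\<^sup>2 / d\<^sup>2 * (2 * d + c)"
    unfolding t_def using d by (simp add: field_simps power2_eq_square)
  moreover have "a\<^sup>2 / d\<^sup>2 > 0" using a d by simp
  moreover have "2 * d + c > 0" unfolding d_def by (cases "c \<ge> 0") auto
  ultimately have "2 * t * a + t\<^sup>2 * c > 0" by (metis mult_pos_pos times_divide_eq_left)
  with assms[of t] show False by simp
qed

lemma rayleigh_max_orthogonal: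
  fixes A :: "real^'n^'n"
  assumes sym: "transpose A = A" and V: "subspace V" and eV: "e \<in> V" and ee: "e \<bullet> e = 1"
    and max: "\<And>y. y \<in> V \<Longrightarrow> norm y = 1 \<Longrightarrow> y \<bullet> (A *v y) \<le> e \<bullet> (A *v e)"
    and hV: "h \<in> V" and he: "h \<bullet> e = 0"
  shows "h \<bullet> (A *v e) = 0"
proof (rule linear_coeff_zero_if_quadratic_nonpos)
  fix t :: real
  define \<mu> where "\<mu> = e \<bullet> (A *v e)"
  define g where "g = e + t *\<^sub>R h"
  have gV: "g \<in> V" unfolding g_def using V eV hV by (simp add: subspace_add subspace_scale)
  have gg: "g \<bullet> g = 1 + t\<^sup>2 * (h \<bullet> h)"
    unfolding g_def using ee he by (simp add: algebra_simps inner_commute power2_eq_square)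
  then have gpos: "g \<bullet> g > 0" by (simp add: add_pos_nonneg)
  then have "g /\<^sub>R norm g \<in> V" "norm (g /\<^sub>R norm g) = 1"
    using gV V by (auto simp: subspace_scale)
  from max[OF this] have "(g \<bullet> (A *v g)) / (norm g)\<^sup>2 \<le> \<mu>"
    unfolding \<mu>_def
    by (simp add: matrix_vector_mult_scaleR power2_eq_square divide_inverse mult_ac)
  then have le: "g \<bullet> (A *v g) \<le> \<mu> * (g \<bullet> g)"
    using gpos by (simp add: divide_le_eq power2_norm_eq_inner)
  have "e \<bullet> (A *v h) = h \<bullet> (A *v e)"
    using symmetric_matrix_inner_commute[OF sym, of h e] by (simp add: inner_commute)
  then have "g \<bullet> (A *v g) = \<mu> + 2 * t * (h \<bullet> (A *v e)) + t\<^sup>2 * (h \<bullet> (A *v h))"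
    unfolding g_def \<mu>_def
    by (simp add: algebra_simps matrix_vector_mult_scaleR inner_commute power2_eq_square)
  with le gg show "2 * t * (h \<bullet> (A *v e)) + t\<^sup>2 * (h \<bullet> (A *v h) - \<mu> * (h \<bullet> h)) \<le> 0"
    by (simp add: algebra_simps)
qed

lemma rayleigh_max_eigenvector:
  fixes A :: "real^'n^'n"
  assumes sym: "transpose A = A" and V: "subspace V" and inv: "\<And>x. x \<in> V \<Longrightarrow> A *v x \<in> V"
    and eV: "e \<in> V" and ee: "e \<bullet> e = 1"
    and max: "\<And>y. y \<in> V \<Longrightarrow> norm y = 1 \<Longrightarrow> y \<bullet> (A *v y) \<le> e \<bullet> (A *v e)"
  shows "A *v e = (e \<bullet> (A *v e)) *\<^sub>R e"
proof -
  define r where "r = A *v e - (e \<bullet> (A *v e)) *\<^sub>R e"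
  have rV: "r \<in> V" unfolding r_def using inv eV V by (simp add: subspace_diff subspace_scale)
  have re: "r \<bullet> e = 0" unfolding r_def using ee by (simp add: algebra_simps inner_commute)
  have "r \<bullet> r = r \<bullet> (A *v e) - (e \<bullet> (A *v e)) * (r \<bullet> e)"
    unfolding r_def by (simp add: algebra_simps inner_commute)
  also have "\<dots> = 0"
    using rayleigh_max_orthogonal[OF sym V eV ee max rV re] re by simp
  finally show ?thesis unfolding r_def by simp
qed

lemma symmetric_invariant_subspace_eigenvector:
  fixes A :: "real^'n^'n"
  assumes sym: "transpose A = A" and V: "subspace V" and inv: "\<And>x. x \<in> V \<Longrightarrow> A *v x \<in> V"
    and nontrivial: "V \<noteq> {0}"
  obtains e where "e \<in> V" "e \<bullet> e = 1" "A *v e = (e \<bullet> (A *v e)) *\<^sub>R e"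
proof -
  define K where "K = V \<inter> sphere 0 1"
  obtain z where z: "z \<in> V" "z \<noteq> 0" using V nontrivial subspace_0 by blast
  have "compact K" unfolding K_def using V by (simp add: closed_subspace closed_Int_compact)
  moreover have "z /\<^sub>R norm z \<in> K" unfolding K_def using z V by (simp add: subspace_scale)
  moreover have "continuous_on K (\<lambda>x. x \<bullet> (A *v x))"
    by (intro continuous_intros continuous_on_compose2[of UNIV "(*v) A"])
       (auto intro: linear_continuous_on matrix_vector_mul_linear)
  ultimately obtain e where "e \<in> K" and max: "\<And>y. y \<in> K \<Longrightarrow> y \<bullet> (A *v y) \<le> e \<bullet> (A *v e)"
    using continuous_attains_sup[of K] by blast
  then have eV: "e \<in> V" and ee: "e \<bullet> e = 1" unfolding K_def by (auto simp: norm_eq_1)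
  show thesis
    by (rule that[OF eV ee rayleigh_max_eigenvector[OF sym V inv eV ee]]) (use max K_def in auto)
qed

definition orthonormal_set :: "(real^'n) set \<Rightarrow> bool" where
  "orthonormal_set B \<longleftrightarrow> finite B \<and> (\<forall>b\<in>B. \<forall>c\<in>B. b \<bullet> c = (if b = c then 1 else 0))"

lemma symmetric_invariant_subspace_eigenbasis:
  fixes A :: "real^'n^'n"
  assumes sym: "transpose A = A"
  shows "subspace V \<Longrightarrow> (\<And>x. x \<in> V \<Longrightarrow> A *v x \<in> V) \<Longrightarrow>
    \<exists>B. orthonormal_set B \<and> B \<subseteq> V \<and> span B = V \<and> (\<forall>b\<in>B. A *v b = (b \<bullet> (A *v b)) *\<^sub>R b)"
proof (induction "dim V" arbitrary: V rule: less_induct)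
  case less
  note V = less.prems(1) and inv = less.prems(2)
  show ?case
  proof (cases "V = {0}")
    case True
    then show ?thesis by (intro exI[of _ "{}"]) (auto simp: orthonormal_set_def)
  next
    case False
    then obtain e where eV: "e \<in> V" and ee: "e \<bullet> e = 1" and eig: "A *v e = (e \<bullet> (A *v e)) *\<^sub>R e"
      using symmetric_invariant_subspace_eigenvector[OF sym V inv] by blast
    define V' where "V' = V \<inter> {x. e \<bullet> x = 0}"
    have "subspace {x. e \<bullet> x = 0}" by (simp add: subspace_def inner_add_right)
    then have V': "subspace V'" unfolding V'_def using V by (simp add: subspace_inter)
    have inv': "A *v x \<in> V'" if "x \<in> V'" for x
    proof -
      have "e \<bullet> (A *v x) = (A *v e) \<bullet> x" by (rule symmetric_matrix_inner_commute[OF sym, symmetric])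
      also have "\<dots> = 0" using that unfolding V'_def by (subst eig) simp
      finally show ?thesis using that inv unfolding V'_def by simp
    qed
    have "V' \<subset> V" unfolding V'_def using eV ee by force
    then have "dim V' < dim V" using V V' by (metis dim_psubset span_eq_iff)
    from less.hyps[OF this V' inv'] obtain B where B: "orthonormal_set B" "B \<subseteq> V'" "span B = V'"
      "\<forall>b\<in>B. A *v b = (b \<bullet> (A *v b)) *\<^sub>R b" by blast
    have eB: "e \<bullet> b = 0" "b \<bullet> e = 0" if "b \<in> B" for b
      using B(2) that unfolding V'_def by (auto simp: inner_commute)
    show ?thesis
    proof (intro exI[of _ "insert e B"] conjI)
      show "orthonormal_set (insert e B)"
        using B(1) eB ee unfolding orthonormal_set_def by auto
      show "insert e B \<subseteq> V" using B(2) eV unfolding V'_def by auto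
      show "\<forall>b\<in>insert e B. A *v b = (b \<bullet> (A *v b)) *\<^sub>R b" using B(4) eig by auto
      show "span (insert e B) = V"
      proof
        show "span (insert e B) \<subseteq> V"
          using \<open>insert e B \<subseteq> V\<close> V by (metis span_mono span_eq_iff)
        show "V \<subseteq> span (insert e B)"
        proof
          fix x assume "x \<in> V"
          then have "x - (e \<bullet> x) *\<^sub>R e \<in> V'" unfolding V'_def using eV V ee
            by (simp add: subspace_diff subspace_scale algebra_simps)
          then show "x \<in> span (insert e B)" using B(3) span_breakdown_eq by blast
        qed
      qed
    qed
  qed
qed

lemma orthonormal_set_inner_sum:
  assumes "orthonormal_set B" "c \<in> B"
  shows "c \<bullet> (\<Sum>b\<in>B. f b *\<^sub>R b) = f c"
proof -
  have "c \<bullet> b = (if b = c then 1 else 0)" if "b \<in> B" for b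
    using assms that unfolding orthonormal_set_def by auto
  then have "c \<bullet> (\<Sum>b\<in>B. f b *\<^sub>R b) = (\<Sum>b\<in>B. if b = c then f c else 0)"
    unfolding inner_sum_right by (intro sum.cong refl) simp
  also have "\<dots> = f c" using assms unfolding orthonormal_set_def by (simp add: sum.delta)
  finally show ?thesis .
qed

lemma orthonormal_basis_expansion:
  assumes B: "orthonormal_set B" and spanning: "span B = UNIV"
  shows "x = (\<Sum>b\<in>B. (b \<bullet> x) *\<^sub>R b)"
proof -
  define y where "y = x - (\<Sum>b\<in>B. (b \<bullet> x) *\<^sub>R b)"
  have "orthogonal c y" if "c \<in> B" for c
    using orthonormal_set_inner_sum[OF B that, of "\<lambda>b. b \<bullet> x"]
    unfolding y_def orthogonal_def by (simp add: inner_diff_right)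
  then have "orthogonal y y" using spanning by (metis UNIV_I orthogonal_commute orthogonal_to_span)
  then show ?thesis unfolding y_def orthogonal_def by simp
qed

definition basis_diag :: "(real^'n) set \<Rightarrow> (real^'n \<Rightarrow> real) \<Rightarrow> real^'n^'n" where
  "basis_diag B f = (\<Sum>b\<in>B. f b *\<^sub>R outer b b)"

lemma transpose_basis_diag: "transpose (basis_diag B f) = basis_diag B f"
  unfolding basis_diag_def transpose_sum by (simp add: transpose_scalar transpose_outer)

lemma basis_diag_mult_vector: "basis_diag B f *v x = (\<Sum>b\<in>B. (f b * (b \<bullet> x)) *\<^sub>R b)"
  unfolding basis_diag_def sum_matrix_vector_mult scaleR_matrix_vector_assoc[symmetric] outer_mult_vector
  by simp

lemma inner_basis_diag: "x \<bullet> (basis_diag B f *v x) = (\<Sum>b\<in>B. f b * (b \<bullet> x)\<^sup>2)"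
  unfolding basis_diag_mult_vector
  by (simp add: inner_sum_right power2_eq_square inner_commute mult.assoc)

lemma basis_diag_eigen:
  assumes "orthonormal_set B" "b \<in> B"
  shows "basis_diag B f *v b = f b *\<^sub>R b"
proof -
  have "basis_diag B f *v b = (\<Sum>c\<in>B. if c = b then f b *\<^sub>R b else 0)"
    unfolding basis_diag_mult_vector using assms unfolding orthonormal_set_def by (intro sum.cong) auto
  also have "\<dots> = f b *\<^sub>R b" using assms unfolding orthonormal_set_def by (simp add: sum.delta')
  finally show ?thesis .
qed

lemma basis_diag_mult:
  assumes B: "orthonormal_set B"
  shows "basis_diag B f ** basis_diag B g = basis_diag B (\<lambda>b. f b * g b)"
proof -
  have "basis_diag B f ** basis_diag B g = (\<Sum>b\<in>B. \<Sum>c\<in>B. (f b * g c * (b \<bullet> c)) *\<^sub>R outer b c)"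
    unfolding basis_diag_def sum_matrix_mult matrix_mult_sum_right scaleR_matrix_mult matrix_mult_scaleR
      outer_mult_outer
    by (subst sum.swap) (simp add: scaleR_sum_right mult_ac inner_commute)
  also have "\<dots> = (\<Sum>b\<in>B. \<Sum>c\<in>B. if c = b then (f b * g b) *\<^sub>R outer b b else 0)"
    using B unfolding orthonormal_set_def by (intro sum.cong refl) auto
  also have "\<dots> = basis_diag B (\<lambda>b. f b * g b)"
    using B unfolding basis_diag_def orthonormal_set_def by (simp add: sum.delta)
  finally show ?thesis .
qed

lemma symmetric_matrix_spectral:
  fixes A :: "real^'n^'n"
  assumes sym: "transpose A = A"
  obtains B where "orthonormal_set B" "A = basis_diag B (\<lambda>b. b \<bullet> (A *v b))"
proof -
  obtain B where B: "orthonormal_set B" "span B = UNIV"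
      and eig: "\<And>b. b \<in> B \<Longrightarrow> A *v b = (b \<bullet> (A *v b)) *\<^sub>R b"
    using symmetric_invariant_subspace_eigenbasis[OF sym, of UNIV] by auto
  have "A *v x = basis_diag B (\<lambda>b. b \<bullet> (A *v b)) *v x" for x
  proof -
    have "A *v x = A *v (\<Sum>b\<in>B. (b \<bullet> x) *\<^sub>R b)" using orthonormal_basis_expansion[OF B] by simp
    also have "\<dots> = (\<Sum>b\<in>B. (b \<bullet> x) *\<^sub>R (A *v b))"
      by (simp add: linear_sum[OF matrix_vector_mul_linear] matrix_vector_mult_scaleR)
    also have "\<dots> = basis_diag B (\<lambda>b. b \<bullet> (A *v b)) *v x"
      unfolding basis_diag_mult_vector by (intro sum.cong refl) (metis eig mult.commute scaleR_scaleR)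
    finally show ?thesis .
  qed
  then have "A = basis_diag B (\<lambda>b. b \<bullet> (A *v b))" by (rule matrix_eq[THEN iffD2, rule_format])
  with B(1) show thesis by (rule that)
qed

section \<open>Square roots and pseudo-inverses\<close>

lemma psd_mat_quadratic_zero:
  fixes S :: "real^'n^'n"
  assumes S: "psd_mat S" and zero: "x \<bullet> (S *v x) = 0"
  shows "S *v x = 0"
proof -
  have sym: "transpose S = S" using S unfolding psd_mat_def by auto
  have "y \<bullet> (S *v x) = 0" for y
  proof -
    have "- (y \<bullet> (S *v x)) = 0"
    proof (rule linear_coeff_zero_if_quadratic_nonpos)
      fix t :: real
      have "0 \<le> (x + t *\<^sub>R y) \<bullet> (S *v (x + t *\<^sub>R y))" using S unfolding psd_mat_def by blast
      moreover have "x \<bullet> (S *v y) = y \<bullet> (S *v x)"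
        using symmetric_matrix_inner_commute[OF sym, of y x] by (simp add: inner_commute)
      ultimately have "0 \<le> 2 * t * (y \<bullet> (S *v x)) + t\<^sup>2 * (y \<bullet> (S *v y))"
        using zero by (simp add: algebra_simps matrix_vector_mult_scaleR power2_eq_square inner_commute)
      then show "2 * t * - (y \<bullet> (S *v x)) + t\<^sup>2 * - (y \<bullet> (S *v y)) \<le> 0" by simp
    qed
    then show ?thesis by simp
  qed
  from this[of "S *v x"] show ?thesis by simp
qed

lemma psd_square_eq_eigenvalue_diff:
  fixes S T :: "real^'n^'n"
  assumes S: "psd_mat S" and T: "psd_mat T" and eq: "S ** S = T ** T"
    and eig: "(S - T) *v b = \<mu> *\<^sub>R b" and "b \<noteq> 0"
  shows "\<mu> = 0"
proof (rule ccontr)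
  assume \<mu>: "\<mu> \<noteq> 0"
  have "transpose (S - T) = S - T"
    using S T unfolding psd_mat_def transpose_diff by simp
  then have sym: "b \<bullet> ((S - T) *v (T *v b)) = ((S - T) *v b) \<bullet> (T *v b)"
    using symmetric_matrix_inner_commute by metis
  have "0 = b \<bullet> ((S ** S) *v b) - b \<bullet> ((T ** T) *v b)" using eq by simp
  also have "\<dots> = b \<bullet> (S *v ((S - T) *v b)) + b \<bullet> ((S - T) *v (T *v b))"
    by (simp add: matrix_vector_mul_assoc[symmetric] matrix_vector_mult_diff_rdistrib
        matrix_vector_mult_diff_distrib inner_diff_right)
  also have "\<dots> = b \<bullet> (S *v ((S - T) *v b)) + ((S - T) *v b) \<bullet> (T *v b)"
    using sym by simp
  also have "\<dots> = \<mu> * (b \<bullet> (S *v b) + b \<bullet> (T *v b))"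
    unfolding eig by (simp add: matrix_vector_mult_scaleR algebra_simps)
  finally have "b \<bullet> (S *v b) + b \<bullet> (T *v b) = 0" using \<mu> by simp
  moreover have "0 \<le> b \<bullet> (S *v b)" "0 \<le> b \<bullet> (T *v b)" using S T unfolding psd_mat_def by auto
  ultimately have "S *v b = 0" "T *v b = 0" using psd_mat_quadratic_zero S T by fastforce+
  then have "\<mu> *\<^sub>R b = 0" using eig by (simp add: matrix_vector_mult_diff_rdistrib)
  with \<mu> \<open>b \<noteq> 0\<close> show False by simp
qed

lemma psd_square_root_unique:
  fixes S T :: "real^'n^'n"
  assumes S: "psd_mat S" and T: "psd_mat T" and eq: "S ** S = T ** T"
  shows "S = T"
proof -
  have "transpose (S - T) = S - T"
    using S T unfolding psd_mat_def transpose_diff by simp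
  then obtain B where B: "orthonormal_set B" and D: "S - T = basis_diag B (\<lambda>b. b \<bullet> ((S - T) *v b))"
    by (rule symmetric_matrix_spectral)
  have "b \<bullet> ((S - T) *v b) = 0" if "b \<in> B" for b
  proof (rule psd_square_eq_eigenvalue_diff[OF S T eq])
    show "(S - T) *v b = (b \<bullet> ((S - T) *v b)) *\<^sub>R b"
      using basis_diag_eigen[OF B that] D by metis
    show "b \<noteq> 0" using B that unfolding orthonormal_set_def by fastforce
  qed
  then have "S - T = basis_diag B (\<lambda>b. 0)"
    by (subst D) (simp add: basis_diag_def)
  then show ?thesis by (simp add: basis_diag_def)
qed

lemma psd_mat_ex1_square_root:
  fixes A :: "real^'n^'n"
  assumes A: "psd_mat A"
  shows "\<exists>!S. psd_mat S \<and> S ** S = A"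
proof -
  obtain B where B: "orthonormal_set B" and AB: "A = basis_diag B (\<lambda>b. b \<bullet> (A *v b))"
    using symmetric_matrix_spectral A unfolding psd_mat_def by blast
  define S where "S = basis_diag B (\<lambda>b. sqrt (b \<bullet> (A *v b)))"
  have nonneg: "0 \<le> b \<bullet> (A *v b)" for b using A unfolding psd_mat_def by auto
  have "psd_mat S" unfolding psd_mat_def S_def
    by (auto simp: transpose_basis_diag inner_basis_diag nonneg intro!: sum_nonneg)
  moreover have "S ** S = A"
    unfolding S_def basis_diag_mult[OF B] using nonneg AB by simp
  ultimately show ?thesis using psd_square_root_unique by blast
qed

lemma psd_mat_msqrt: "psd_mat A \<Longrightarrow> psd_mat (msqrt A)"
  and msqrt_mult_msqrt: "psd_mat A \<Longrightarrow> msqrt A ** msqrt A = A"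
  unfolding msqrt_def using theI'[OF psd_mat_ex1_square_root] by blast+

definition penrose :: "real^'n^'m \<Rightarrow> real^'m^'n \<Rightarrow> bool" where
  "penrose A X \<longleftrightarrow> A ** X ** A = A \<and> X ** A ** X = X \<and>
      transpose (A ** X) = A ** X \<and> transpose (X ** A) = X ** A"

lemma penrose_unique:
  assumes X: "penrose A X" and Y: "penrose A Y"
  shows "X = Y"
proof -
  have X1: "A ** X ** A = A" and X2: "X ** A ** X = X" and X3: "transpose (A ** X) = A ** X"
    and X4: "transpose (X ** A) = X ** A" using X unfolding penrose_def by auto
  have Y1: "A ** Y ** A = A" and Y2: "Y ** A ** Y = Y" and Y3: "transpose (A ** Y) = A ** Y"
    and Y4: "transpose (Y ** A) = Y ** A" using Y unfolding penrose_def by auto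
  have "X = X ** (A ** X)" using X2 by (simp add: matrix_mul_assoc)
  also have "\<dots> = X ** transpose X ** transpose A" using X3
    by (metis matrix_mul_assoc matrix_transpose_mul)
  also have "\<dots> = X ** transpose X ** transpose (A ** Y ** A)" using Y1 by simp
  also have "\<dots> = X ** transpose (A ** X) ** transpose (A ** Y)"
    by (simp add: matrix_transpose_mul matrix_mul_assoc)
  also have "\<dots> = X ** (A ** X) ** (A ** Y)" using X3 Y3 by simp
  also have "\<dots> = X ** A ** Y" using X2 by (simp add: matrix_mul_assoc)
  finally have XAY: "X = X ** A ** Y" .
  have "Y = Y ** A ** Y" using Y2 by simp
  also have "\<dots> = transpose A ** transpose Y ** Y" using Y4 by (metis matrix_transpose_mul)
  also have "\<dots> = transpose (A ** X ** A) ** transpose Y ** Y" using X1 by simp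
  also have "\<dots> = transpose (X ** A) ** transpose (Y ** A) ** Y"
    by (simp add: matrix_transpose_mul matrix_mul_assoc)
  also have "\<dots> = X ** A ** (Y ** A) ** Y" using X4 Y4 by simp
  also have "\<dots> = X ** A ** Y" using Y2 by (metis matrix_mul_assoc)
  finally show ?thesis using XAY by simp
qed

lemma penrose_pinv: "penrose A X \<Longrightarrow> penrose A (pinv A)"
  unfolding pinv_def using theI'[of "penrose A"] penrose_unique unfolding penrose_def by blast

lemma symmetric_matrix_penrose_ex:
  fixes S :: "real^'n^'n"
  assumes "transpose S = S"
  shows "\<exists>X. penrose S X"
proof -
  obtain B where B: "orthonormal_set B" and SB: "S = basis_diag B (\<lambda>b. b \<bullet> (S *v b))"
    using symmetric_matrix_spectral assms by blast
  define \<mu> where "\<mu> b = b \<bullet> (S *v b)" for b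
  have pseudo_inverse: "a * inverse a * a = a" "inverse a * a * inverse a = inverse a" for a :: real
    by (cases "a = 0"; simp)+
  have "basis_diag B \<mu> ** basis_diag B (\<lambda>b. inverse (\<mu> b)) ** basis_diag B \<mu> = basis_diag B \<mu>"
    "basis_diag B (\<lambda>b. inverse (\<mu> b)) ** basis_diag B \<mu> ** basis_diag B (\<lambda>b. inverse (\<mu> b))
      = basis_diag B (\<lambda>b. inverse (\<mu> b))"
    unfolding basis_diag_mult[OF B] pseudo_inverse by simp_all
  then have "penrose (basis_diag B \<mu>) (basis_diag B (\<lambda>b. inverse (\<mu> b)))"
    unfolding penrose_def by (simp add: basis_diag_mult[OF B] transpose_basis_diag)
  then show ?thesis using SB unfolding \<mu>_def by metis
qed

lemma transpose_pinv_symmetric: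
  fixes S :: "real^'n^'n"
  assumes sym: "transpose S = S" and pen: "penrose S (pinv S)"
  shows "transpose (pinv S) = pinv S"
proof -
  have "penrose S (transpose (pinv S))" using pen sym unfolding penrose_def
    by (metis matrix_transpose_mul matrix_mul_assoc transpose_transpose)
  then show ?thesis using pen penrose_unique by blast
qed

lemma penrose_pinv_msqrt: "psd_mat E \<Longrightarrow> penrose (msqrt E) (pinv (msqrt E))"
  using psd_mat_msqrt symmetric_matrix_penrose_ex penrose_pinv unfolding psd_mat_def by blast

lemma transpose_pinv_msqrt: "psd_mat E \<Longrightarrow> transpose (pinv (msqrt E)) = pinv (msqrt E)"
  using psd_mat_msqrt penrose_pinv_msqrt transpose_pinv_symmetric unfolding psd_mat_def by blast

lemma pinv_msqrt_whitening:
  fixes E :: "real^'n^'n"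
  assumes E: "psd_mat E"
  shows "pinv (msqrt E) ** pinv (msqrt E) ** E ** pinv (msqrt E) = pinv (msqrt E)"
proof -
  define S where "S = msqrt E"
  define P where "P = pinv S"
  have pen: "penrose S P" unfolding S_def P_def using penrose_pinv_msqrt[OF E] .
  have "S ** P = transpose (S ** P)" using pen unfolding penrose_def by simp
  also have "\<dots> = P ** S"
    using transpose_pinv_msqrt[OF E] psd_mat_msqrt[OF E] unfolding S_def P_def psd_mat_def
    by (simp add: matrix_transpose_mul)
  finally have commute: "S ** P = P ** S" .
  have "P ** P ** (S ** S) ** P = P ** (P ** S) ** (S ** P)" by (simp add: matrix_mul_assoc)
  also have "\<dots> = P ** (S ** P) ** (S ** P)" by (simp only: commute)
  also have "\<dots> = (P ** S ** P) ** S ** P" by (simp add: matrix_mul_assoc)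
  also have "\<dots> = P" using pen unfolding penrose_def by simp
  finally show ?thesis using msqrt_mult_msqrt[OF E] unfolding S_def P_def by simp
qed

section \<open>Frobenius inner product and truncated SVDs\<close>

lemma inner_transpose: "transpose X \<bullet> transpose Y = X \<bullet> (Y :: real^'n^'m)"
  unfolding inner_vec_def transpose_def by (simp, rule sum.swap)

lemma inner_matrix_mult_left: "(X ** Y) \<bullet> Z = X \<bullet> (Z ** transpose Y)"
  for X :: "real^'k^'m" and Y :: "real^'n^'k"
proof -
  have "(X ** Y) \<bullet> Z = (\<Sum>i\<in>UNIV. \<Sum>j\<in>UNIV. \<Sum>l\<in>UNIV. X$i$l * Y$l$j * Z$i$j)"
    unfolding inner_vec_def matrix_matrix_mult_def by (simp add: sum_distrib_right)
  also have "\<dots> = (\<Sum>i\<in>UNIV. \<Sum>l\<in>UNIV. \<Sum>j\<in>UNIV. X$i$l * Y$l$j * Z$i$j)"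
    by (rule sum.cong[OF refl], rule sum.swap)
  also have "\<dots> = X \<bullet> (Z ** transpose Y)"
    unfolding inner_vec_def matrix_matrix_mult_def transpose_def by (simp add: sum_distrib_left mult_ac)
  finally show ?thesis .
qed

lemma inner_matrix_mult_right: "(X ** Y) \<bullet> Z = Y \<bullet> (transpose X ** Z)"
  for X :: "real^'k^'m" and Y :: "real^'n^'k"
proof -
  have "(X ** Y) \<bullet> Z = (transpose Y ** transpose X) \<bullet> transpose Z"
    by (metis inner_transpose matrix_transpose_mul)
  also have "\<dots> = transpose Y \<bullet> transpose (transpose X ** Z)"
    by (simp add: inner_matrix_mult_left matrix_transpose_mul)
  finally show ?thesis by (simp add: inner_transpose)
qed

lemma inner_outer: "outer a b \<bullet> Z = a \<bullet> (Z *v b)"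
  unfolding inner_vec_def outer_def matrix_vector_mult_def by (simp add: sum_distrib_left mult_ac)

context
  fixes A :: "real^'n^'m" and s :: "nat \<Rightarrow> real" and u :: "nat \<Rightarrow> real^'m" and w :: "nat \<Rightarrow> real^'n"
  assumes svd: "is_svd A s u w"
begin

lemma is_svd_left_orthonormal:
  "i < min CARD('m) CARD('n) \<Longrightarrow> j < min CARD('m) CARD('n) \<Longrightarrow> u i \<bullet> u j = (if i = j then 1 else 0)"
  using svd unfolding is_svd_def Let_def by auto

lemma is_svd_right_orthonormal:
  "i < min CARD('m) CARD('n) \<Longrightarrow> j < min CARD('m) CARD('n) \<Longrightarrow> w i \<bullet> w j = (if i = j then 1 else 0)"
  using svd unfolding is_svd_def Let_def by auto

lemma is_svd_eq_svd_trunc: "A = svd_trunc s u w (min CARD('m) CARD('n))"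
  using svd unfolding is_svd_def svd_trunc_def Let_def by auto

lemma svd_trunc_mult_right_singular_vector:
  assumes r: "r \<le> min CARD('m) CARD('n)" and j: "j < r"
  shows "svd_trunc s u w r *v w j = s j *\<^sub>R u j"
proof -
  have "svd_trunc s u w r *v w j = (\<Sum>i<r. if i = j then s j *\<^sub>R u j else 0)"
    unfolding svd_trunc_def sum_matrix_vector_mult scaleR_matrix_vector_assoc[symmetric] outer_mult_vector
    using is_svd_right_orthonormal r j by (intro sum.cong) auto
  also have "\<dots> = s j *\<^sub>R u j" using j by (simp add: sum.delta')
  finally show ?thesis .
qed

lemma inner_svd_trunc:
  assumes r: "r \<le> min CARD('m) CARD('n)" and X: "\<And>j. j < r \<Longrightarrow> X *v w j = s j *\<^sub>R u j"
  shows "svd_trunc s u w r \<bullet> X = (\<Sum>j<r. (s j)\<^sup>2)"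
  unfolding svd_trunc_def inner_sum_left inner_scaleR_left inner_outer
  using X is_svd_left_orthonormal r by (intro sum.cong) (auto simp: power2_eq_square)

lemma inner_svd_trunc_self:
  "r \<le> min CARD('m) CARD('n) \<Longrightarrow> svd_trunc s u w r \<bullet> A = (\<Sum>j<r. (s j)\<^sup>2)"
  by (rule inner_svd_trunc)
     (use svd_trunc_mult_right_singular_vector[OF order_refl] is_svd_eq_svd_trunc in auto)

lemma inner_svd_trunc_trunc:
  "r \<le> min CARD('m) CARD('n) \<Longrightarrow> svd_trunc s u w r \<bullet> svd_trunc s u w r = (\<Sum>j<r. (s j)\<^sup>2)"
  by (rule inner_svd_trunc) (use svd_trunc_mult_right_singular_vector in auto)

lemma svd_trunc_eq_projection:
  assumes r: "r \<le> min CARD('m) CARD('n)"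
  shows "(\<Sum>j<r. outer (u j) (u j)) ** A = svd_trunc s u w r"
proof -
  let ?q = "min CARD('m) CARD('n)"
  have "(\<Sum>j<r. outer (u j) (u j)) ** A
      = (\<Sum>j<r. \<Sum>i<?q. (s i * (u j \<bullet> u i)) *\<^sub>R outer (u j) (w i))"
    by (subst is_svd_eq_svd_trunc)
       (simp add: svd_trunc_def sum_matrix_mult matrix_mult_sum_right matrix_mult_scaleR outer_mult_outer
         scaleR_sum_right, subst sum.swap, simp add: mult_ac)
  also have "\<dots> = (\<Sum>j<r. \<Sum>i<?q. if i = j then s j *\<^sub>R outer (u j) (w j) else 0)"
    using is_svd_left_orthonormal r by (intro sum.cong refl) auto
  also have "\<dots> = svd_trunc s u w r"
    using r by (simp add: svd_trunc_def sum.delta)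
  finally show ?thesis .
qed

end

lemma inner_svd_trunc_pinv_msqrt_cross:
  fixes C :: "real^'n^'m"
  assumes E: "psd_mat E" and svd: "is_svd (C ** pinv (msqrt E)) s u w"
    and r: "r \<le> min CARD('m) CARD('n)"
  shows "(svd_trunc s u w r ** pinv (msqrt E)) \<bullet> C = (\<Sum>j<r. (s j)\<^sup>2)"
  using inner_svd_trunc_self[OF svd r]
  by (simp add: inner_matrix_mult_left transpose_pinv_msqrt[OF E])

lemma inner_svd_trunc_pinv_msqrt_cov:
  fixes C :: "real^'n^'m"
  assumes E: "psd_mat E" and svd: "is_svd (C ** pinv (msqrt E)) s u w"
    and r: "r \<le> min CARD('m) CARD('n)"
  shows "(transpose (svd_trunc s u w r ** pinv (msqrt E)) ** (svd_trunc s u w r ** pinv (msqrt E))) \<bullet> E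
    = (\<Sum>j<r. (s j)\<^sup>2)"
proof -
  define P where "P = pinv (msqrt E)"
  define G where "G = svd_trunc s u w r"
  define U where "U = (\<Sum>j<r. outer (u j) (u j))"
  have G: "G = U ** (C ** P)"
    unfolding G_def U_def P_def using svd_trunc_eq_projection[OF svd r] by simp
  have "G ** P ** E ** P = U ** (C ** (P ** P ** E ** P))"
    unfolding G by (simp add: matrix_mul_assoc)
  also have "\<dots> = G" unfolding G P_def pinv_msqrt_whitening[OF E] ..
  finally have GPEP: "G ** P ** E ** P = G" .
  have "(transpose (G ** P) ** (G ** P)) \<bullet> E = (G ** P) \<bullet> (G ** P ** E)"
    by (simp add: inner_matrix_mult_right)
  also have "\<dots> = G \<bullet> G"
    using GPEP by (simp add: inner_matrix_mult_left P_def transpose_pinv_msqrt[OF E])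
  also have "\<dots> = (\<Sum>j<r. (s j)\<^sup>2)" unfolding G_def by (rule inner_svd_trunc_trunc[OF svd r])
  finally show ?thesis unfolding G_def P_def .
qed

section \<open>Second moments of random vectors\<close>

lemma integrable_component_mult:
  fixes f :: "'a \<Rightarrow> real^'m" and g :: "'a \<Rightarrow> real^'n"
  assumes f: "f \<in> borel_measurable M" "integrable M (\<lambda>\<omega>. (norm (f \<omega>))\<^sup>2)"
    and g: "g \<in> borel_measurable M" "integrable M (\<lambda>\<omega>. (norm (g \<omega>))\<^sup>2)"
  shows "integrable M (\<lambda>\<omega>. f \<omega> $ i * g \<omega> $ j)"
proof (rule Bochner_Integration.integrable_bound)
  show "integrable M (\<lambda>\<omega>. (norm (f \<omega>))\<^sup>2 + (norm (g \<omega>))\<^sup>2)" using f g by simp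
  show "(\<lambda>\<omega>. f \<omega> $ i * g \<omega> $ j) \<in> borel_measurable M"
    by (intro borel_measurable_times measurable_compose[OF f(1) borel_measurable_nth]
        measurable_compose[OF g(1) borel_measurable_nth])
  show "AE \<omega> in M. norm (f \<omega> $ i * g \<omega> $ j) \<le> norm ((norm (f \<omega>))\<^sup>2 + (norm (g \<omega>))\<^sup>2)"
  proof (rule AE_I2)
    fix \<omega>
    have "\<bar>f \<omega> $ i * g \<omega> $ j\<bar> \<le> norm (f \<omega>) * norm (g \<omega>)"
      unfolding abs_mult by (intro mult_mono component_le_norm_cart) auto
    also have "\<dots> \<le> (norm (f \<omega>))\<^sup>2 + (norm (g \<omega>))\<^sup>2"
      using sum_squares_bound[of "norm (f \<omega>)" "norm (g \<omega>)"]
        mult_nonneg_nonneg[OF norm_ge_zero[of "f \<omega>"] norm_ge_zero[of "g \<omega>"]]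
      unfolding power2_eq_square by linarith
    finally show "norm (f \<omega> $ i * g \<omega> $ j) \<le> norm ((norm (f \<omega>))\<^sup>2 + (norm (g \<omega>))\<^sup>2)" by simp
  qed
qed

lemma
  fixes f :: "'a \<Rightarrow> real^'m" and g :: "'a \<Rightarrow> real^'n" and X :: "real^'n^'m"
  assumes f: "f \<in> borel_measurable M" "integrable M (\<lambda>\<omega>. (norm (f \<omega>))\<^sup>2)"
    and g: "g \<in> borel_measurable M" "integrable M (\<lambda>\<omega>. (norm (g \<omega>))\<^sup>2)"
  shows integrable_inner_matrix_vector_mult: "integrable M (\<lambda>\<omega>. f \<omega> \<bullet> (X *v g \<omega>))"
    and integral_inner_matrix_vector_mult: "integral\<^sup>L M (\<lambda>\<omega>. f \<omega> \<bullet> (X *v g \<omega>)) = X \<bullet> cross_cov M f g"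
proof -
  have expand: "f \<omega> \<bullet> (X *v g \<omega>) = (\<Sum>i\<in>UNIV. \<Sum>j\<in>UNIV. X$i$j * (f \<omega> $ i * g \<omega> $ j))" for \<omega>
    by (simp add: inner_vec_def matrix_vector_mult_def sum_distrib_left mult_ac)
  note integrable = integrable_component_mult[OF f g]
  show "integrable M (\<lambda>\<omega>. f \<omega> \<bullet> (X *v g \<omega>))"
    unfolding expand using integrable
    by (intro Bochner_Integration.integrable_sum Bochner_Integration.integrable_mult_right) auto
  show "integral\<^sup>L M (\<lambda>\<omega>. f \<omega> \<bullet> (X *v g \<omega>)) = X \<bullet> cross_cov M f g"
    unfolding expand using integrable
    by (simp add: Bochner_Integration.integral_sum inner_vec_def cross_cov_def)
qed

lemma psd_mat_cross_cov_self:
  fixes v :: "'a \<Rightarrow> real^'n"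
  assumes "v \<in> borel_measurable M" "integrable M (\<lambda>\<omega>. (norm (v \<omega>))\<^sup>2)"
  shows "psd_mat (cross_cov M v v)"
  unfolding psd_mat_def
proof (intro conjI allI)
  show "transpose (cross_cov M v v) = cross_cov M v v"
    by (simp add: cross_cov_def transpose_def vec_eq_iff mult.commute)
  fix z :: "real^'n"
  have "z \<bullet> (cross_cov M v v *v z) = integral\<^sup>L M (\<lambda>\<omega>. v \<omega> \<bullet> (outer z z *v v \<omega>))"
    using integral_inner_matrix_vector_mult[OF assms assms] by (simp add: inner_outer)
  also have "\<dots> \<ge> 0"
    by (intro integral_nonneg_AE AE_I2) (simp add: outer_mult_vector inner_commute)
  finally show "0 \<le> z \<bullet> (cross_cov M v v *v z)" .
qed

lemma norm_diff_sum_squared: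
  fixes a :: "real^'m"
  shows "(norm (a - sum b K))\<^sup>2 = (norm a)\<^sup>2 - 2 * (\<Sum>k\<in>K. a \<bullet> b k) + (\<Sum>k\<in>K. \<Sum>l\<in>K. b k \<bullet> b l)"
  unfolding power2_norm_eq_inner
  by (simp add: inner_diff_left inner_diff_right inner_sum_left inner_sum_right inner_commute)

lemma integral_norm_diff_sum_matrix_vector_mult:
  fixes x :: "'a \<Rightarrow> real^'m" and v :: "'k \<Rightarrow> 'a \<Rightarrow> real^'n" and B :: "'k \<Rightarrow> real^'n^'m"
  assumes x: "x \<in> borel_measurable M" "integrable M (\<lambda>\<omega>. (norm (x \<omega>))\<^sup>2)"
    and v: "\<And>k. k \<in> K \<Longrightarrow> v k \<in> borel_measurable M"
      "\<And>k. k \<in> K \<Longrightarrow> integrable M (\<lambda>\<omega>. (norm (v k \<omega>))\<^sup>2)"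
  shows "integral\<^sup>L M (\<lambda>\<omega>. (norm (x \<omega> - (\<Sum>k\<in>K. B k *v v k \<omega>)))\<^sup>2)
    = integral\<^sup>L M (\<lambda>\<omega>. (norm (x \<omega>))\<^sup>2) - 2 * (\<Sum>k\<in>K. B k \<bullet> cross_cov M x (v k))
      + (\<Sum>k\<in>K. \<Sum>l\<in>K. (transpose (B k) ** B l) \<bullet> cross_cov M (v k) (v l))"
proof -
  define cross where "cross \<omega> = (\<Sum>k\<in>K. x \<omega> \<bullet> (B k *v v k \<omega>))" for \<omega>
  define quad where "quad \<omega> = (\<Sum>k\<in>K. \<Sum>l\<in>K. v k \<omega> \<bullet> ((transpose (B k) ** B l) *v v l \<omega>))" for \<omega>
  have "(norm (x \<omega> - (\<Sum>k\<in>K. B k *v v k \<omega>)))\<^sup>2 = (norm (x \<omega>))\<^sup>2 - 2 * cross \<omega> + quad \<omega>" for \<omega>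
    unfolding cross_def quad_def norm_diff_sum_squared inner_matrix_vector_mult_transpose ..
  moreover have "integrable M cross" "integral\<^sup>L M cross = (\<Sum>k\<in>K. B k \<bullet> cross_cov M x (v k))"
    unfolding cross_def using integrable_inner_matrix_vector_mult[OF x v]
    by (auto simp: Bochner_Integration.integral_sum integral_inner_matrix_vector_mult[OF x v]
        intro!: sum.cong)
  moreover have "integrable M quad"
    "integral\<^sup>L M quad = (\<Sum>k\<in>K. \<Sum>l\<in>K. (transpose (B k) ** B l) \<bullet> cross_cov M (v k) (v l))"
    unfolding quad_def using integrable_inner_matrix_vector_mult[OF v v]
    by (auto simp: Bochner_Integration.integral_sum integral_inner_matrix_vector_mult[OF v v]
        Bochner_Integration.integrable_sum intro!: sum.cong)
  ultimately show ?thesis using x(2) by simp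
qed

lemma integral_norm_diff_reduced_rank_sum:
  fixes x :: "'a \<Rightarrow> real^'m" and v :: "'k \<Rightarrow> 'a \<Rightarrow> real^'n" and r :: "'k \<Rightarrow> nat"
    and s :: "'k \<Rightarrow> nat \<Rightarrow> real" and u :: "'k \<Rightarrow> nat \<Rightarrow> real^'m" and w :: "'k \<Rightarrow> nat \<Rightarrow> real^'n"
  assumes x: "x \<in> borel_measurable M" "integrable M (\<lambda>\<omega>. (norm (x \<omega>))\<^sup>2)"
    and K: "finite K"
    and v: "\<And>k. k \<in> K \<Longrightarrow> v k \<in> borel_measurable M"
      "\<And>k. k \<in> K \<Longrightarrow> integrable M (\<lambda>\<omega>. (norm (v k \<omega>))\<^sup>2)"
    and orth: "\<And>k l. k \<in> K \<Longrightarrow> l \<in> K \<Longrightarrow> k \<noteq> l \<Longrightarrow> cross_cov M (v k) (v l) = 0"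
    and svd: "\<And>k. k \<in> K \<Longrightarrow>
      is_svd (cross_cov M x (v k) ** pinv (msqrt (cross_cov M (v k) (v k)))) (s k) (u k) (w k)"
    and r: "\<And>k. k \<in> K \<Longrightarrow> r k \<le> min CARD('m) CARD('n)"
  shows "integral\<^sup>L M (\<lambda>\<omega>. (norm (x \<omega> -
      (\<Sum>k\<in>K. (svd_trunc (s k) (u k) (w k) (r k) ** pinv (msqrt (cross_cov M (v k) (v k)))) *v v k \<omega>)))\<^sup>2)
    = integral\<^sup>L M (\<lambda>\<omega>. (norm (x \<omega>))\<^sup>2) - (\<Sum>k\<in>K. \<Sum>j<r k. (s k j)\<^sup>2)"
proof -
  define B where "B k = svd_trunc (s k) (u k) (w k) (r k) ** pinv (msqrt (cross_cov M (v k) (v k)))" for k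
  define \<sigma> where "\<sigma> k = (\<Sum>j<r k. (s k j)\<^sup>2)" for k
  have psd: "psd_mat (cross_cov M (v k) (v k))" if "k \<in> K" for k
    using psd_mat_cross_cov_self v that by blast
  have "(\<Sum>l\<in>K. (transpose (B k) ** B l) \<bullet> cross_cov M (v k) (v l)) = \<sigma> k" if k: "k \<in> K" for k
  proof -
    have "(\<Sum>l\<in>K. (transpose (B k) ** B l) \<bullet> cross_cov M (v k) (v l))
        = (\<Sum>l\<in>K. if l = k then \<sigma> k else 0)"
      using inner_svd_trunc_pinv_msqrt_cov[OF psd svd r, OF k k k] orth[OF k]
      unfolding B_def \<sigma>_def by (intro sum.cong refl) auto
    then show ?thesis using K k by simp
  qed
  moreover have "B k \<bullet> cross_cov M x (v k) = \<sigma> k" if k: "k \<in> K" for k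
    unfolding B_def \<sigma>_def by (rule inner_svd_trunc_pinv_msqrt_cross[OF psd svd r, OF k k k])
  moreover have "integral\<^sup>L M (\<lambda>\<omega>. (norm (x \<omega> - (\<Sum>k\<in>K. B k *v v k \<omega>)))\<^sup>2)
    = integral\<^sup>L M (\<lambda>\<omega>. (norm (x \<omega>))\<^sup>2) - 2 * (\<Sum>k\<in>K. B k \<bullet> cross_cov M x (v k))
      + (\<Sum>k\<in>K. \<Sum>l\<in>K. (transpose (B k) ** B l) \<bullet> cross_cov M (v k) (v l))"
    by (rule integral_norm_diff_sum_matrix_vector_mult[OF x v])
  ultimately show ?thesis unfolding B_def \<sigma>_def by simp
qed


theorem corollary5:
  fixes M :: "'a measure"
    and x :: "'a \<Rightarrow> real^'m" and y :: "'a \<Rightarrow> real^'n"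
    and vv :: "nat \<Rightarrow> 'a \<Rightarrow> real^'n"
    and p :: nat and \<eta> :: "nat \<Rightarrow> nat"
    and s :: "nat \<Rightarrow> nat \<Rightarrow> real"
    and u :: "nat \<Rightarrow> nat \<Rightarrow> real^'m" and w :: "nat \<Rightarrow> nat \<Rightarrow> real^'n"
  assumes "prob_space M"
    and "x \<in> borel_measurable M" and "integrable M (\<lambda>\<omega>. (norm (x \<omega>))\<^sup>2)"
    and "y \<in> borel_measurable M" and "integrable M (\<lambda>\<omega>. (norm (y \<omega>))\<^sup>2)"
    and "integral\<^sup>L M x = 0" and "integral\<^sup>L M y = 0"
    and "1 \<le> p"
    and "vv 1 = y"
    and "\<And>k. k \<in> {1..p} \<Longrightarrow> vv k \<in> borel_measurable M"
    and "\<And>k. k \<in> {1..p} \<Longrightarrow> integrable M (\<lambda>\<omega>. (norm (vv k \<omega>))\<^sup>2)"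
    and "\<And>k. k \<in> {1..p} \<Longrightarrow> integral\<^sup>L M (vv k) = 0"
    and "\<And>i j. i \<in> {1..p} \<Longrightarrow> j \<in> {1..p} \<Longrightarrow> i \<noteq> j \<Longrightarrow> cross_cov M (vv i) (vv j) = 0"
    and "(\<Sum>k=1..p. \<eta> k) \<le> min CARD('m) CARD('n)"
    and "\<And>k. k \<in> {1..p} \<Longrightarrow>
           is_svd (cross_cov M x (vv k) ** pinv (msqrt (cross_cov M (vv k) (vv k))))
                  (s k) (u k) (w k)"
  shows "integral\<^sup>L M (\<lambda>\<omega>. (norm (x \<omega> -
            (\<Sum>k=1..p. (svd_trunc (s k) (u k) (w k) (\<eta> k) **
                          pinv (msqrt (cross_cov M (vv k) (vv k)))) *v vv k \<omega>)))\<^sup>2)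
       = integral\<^sup>L M (\<lambda>\<omega>. (norm (x \<omega> -
            (svd_trunc (s 1) (u 1) (w 1) (\<eta> 1) ** pinv (msqrt (cross_cov M y y))) *v y \<omega>))\<^sup>2)
         - (\<Sum>k=2..p. \<Sum>j<\<eta> k. (s k j)\<^sup>2)"
proof -
  have r: "\<eta> k \<le> min CARD('m) CARD('n)" if "k \<in> {1..p}" for k
    using member_le_sum[OF that, of \<eta>] assms(14) by simp
  have "integral\<^sup>L M (\<lambda>\<omega>. (norm (x \<omega> -
            (\<Sum>k=1..p. (svd_trunc (s k) (u k) (w k) (\<eta> k) **
                          pinv (msqrt (cross_cov M (vv k) (vv k)))) *v vv k \<omega>)))\<^sup>2)
       = integral\<^sup>L M (\<lambda>\<omega>. (norm (x \<omega>))\<^sup>2) - (\<Sum>k=1..p. \<Sum>j<\<eta> k. (s k j)\<^sup>2)"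
    by (rule integral_norm_diff_reduced_rank_sum[OF assms(2,3) _ assms(10,11,13,15) r]) simp_all
  moreover have "integral\<^sup>L M (\<lambda>\<omega>. (norm (x \<omega> -
            (\<Sum>k\<in>{1}. (svd_trunc (s k) (u k) (w k) (\<eta> k) **
                          pinv (msqrt (cross_cov M (vv k) (vv k)))) *v vv k \<omega>)))\<^sup>2)
       = integral\<^sup>L M (\<lambda>\<omega>. (norm (x \<omega>))\<^sup>2) - (\<Sum>k\<in>{1}. \<Sum>j<\<eta> k. (s k j)\<^sup>2)"
    by (rule integral_norm_diff_reduced_rank_sum) (use assms(2,3,8,10,11,15) r in auto)
  moreover have "(\<Sum>k=1..p. \<Sum>j<\<eta> k. (s k j)\<^sup>2)
      = (\<Sum>j<\<eta> 1. (s 1 j)\<^sup>2) + (\<Sum>k=2..p. \<Sum>j<\<eta> k. (s k j)\<^sup>2)"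
    using sum.atLeast_Suc_atMost[OF assms(8)] by (simp add: numeral_2_eq_2)
  ultimately show ?thesis using assms(9) by simp
qed

end
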